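(* Let $A\in\mathbb{R}^{n\times n}$ be symmetric, $\beta>0$, $f(\mathbf{z})=\frac12\mathbf{z}^TA\mathbf{z}+\frac{\beta}{2}\sum_kz_k^4$ on $\mathbb{S}^{n-1}$. Let $\nu\in(0,1]$, $\mathbf{z}_0\in\mathbb{S}^{n-1}$ and $\mathcal{R}_\nu=\{\mathbf{z}\in\mathbb{S}^{n-1}:\|\mathbf{z}-\mathbf{z}_0\|^2\le\nu\}$. If $H_f(\mathbf{z})[\mathbf{v}]>0$ for all $\mathbf{v}\in\mathcal{T}_{\mathbf{z}}\setminus\{0\}$ and all $\mathbf{z}\in\mathcal{R}_\nu$, then the problem $\min_{\mathbf{z}\in\mathcal{R}_\nu}f(\mathbf{z})$ has at most one local minimizer.
   Context: $\mathbb{S}^{n-1}$ is the unit sphere in $\mathbb{R}^n$; $\mathcal{T}_{\mathbf{z}}=\{\mathbf{v}\in\mathbb{R}^n:\mathbf{v}^T\mathbf{z}=0\}$; $H_f(\mathbf{z})[\mathbf{v}]=\mathbf{v}^T[A+6\beta\,\mathrm{diag}(z_1^2,\dots,z_n^2)-2\lambda I]\mathbf{v}$ with $2\lambda=\mathbf{z}^TA\mathbf{z}+2\beta\|\mathbf{z}\|_4^4$ (the Riemannian Hessian quadratic form). *)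

theory Defs
  imports "HOL-Analysis.Analysis"
begin

definition unit_sphere :: "(real ^ 'n) set" where
  "unit_sphere = {z. norm z = 1}"

definition tangent_space :: "real ^ 'n \<Rightarrow> (real ^ 'n) set" where
  "tangent_space z = {v. v \<bullet> z = 0}"

definition obj :: "real ^ 'n ^ 'n \<Rightarrow> real \<Rightarrow> real ^ 'n \<Rightarrow> real" where
  "obj A \<beta> z = (1/2) * (z \<bullet> (A *v z)) + (\<beta>/2) * (\<Sum>k\<in>UNIV. (z $ k) ^ 4)"

definition norm4_pow4 :: "real ^ 'n \<Rightarrow> real" where
  "norm4_pow4 z = (\<Sum>k\<in>UNIV. (z $ k) ^ 4)"

definition hess_form :: "real ^ 'n ^ 'n \<Rightarrow> real \<Rightarrow> real ^ 'n \<Rightarrow> real ^ 'n \<Rightarrow> real" where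
  "hess_form A \<beta> z v =
     (let two_lambda = z \<bullet> (A *v z) + 2 * \<beta> * norm4_pow4 z;
          M = A + (\<chi> i j. if i = j then 6 * \<beta> * (z $ i)^2 else 0) - two_lambda *\<^sub>R mat 1
      in v \<bullet> (M *v v))"

definition region :: "real ^ 'n \<Rightarrow> real \<Rightarrow> (real ^ 'n) set" where
  "region z0 \<nu> = {z \<in> unit_sphere. (norm (z - z0))^2 \<le> \<nu>}"

definition local_minimizer_on :: "((real ^ 'n) \<Rightarrow> real) \<Rightarrow> (real ^ 'n) set \<Rightarrow> real ^ 'n \<Rightarrow> bool" where
  "local_minimizer_on g S z \<longleftrightarrow>
     z \<in> S \<and> (\<exists>\<epsilon>>0. \<forall>w\<in>S. norm (w - z) < \<epsilon> \<longrightarrow> g z \<le> g w)"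

end

theory Submission
  imports Defs
begin

(* If z1 and z2 were distinct local minimizers, join them by the shorter great-circle arc
   gamma(t) = cos t z1 + sin t b, 0 <= t <= theta < pi.  Since nu <= 1, R_nu is the spherical cap
   z . z0 >= 1 - nu/2 > 0, and the identity sin theta gamma(t) = sin (theta - t) z1 + sin t z2 keeps
   the whole arc inside it.  Along the arc gamma'' = -gamma and gamma' is a unit tangent vector, so
   (f o gamma)'' (t) = H_f(gamma t)[gamma' t] > 0.  But local minimality at both ends forces
   (f o gamma)'(0) >= 0 >= (f o gamma)'(theta), contradicting the mean value theorem for (f o gamma)'. *)

definition great_circle :: "'a::real_normed_vector \<Rightarrow> 'a \<Rightarrow> real \<Rightarrow> 'a" where
  "great_circle a b t = cos t *\<^sub>R a + sin t *\<^sub>R b"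

lemma great_circle_0 [simp]: "great_circle a b 0 = a"
  by (simp add: great_circle_def)

lemma great_circle_has_vector_derivative:
  "(great_circle a b has_vector_derivative great_circle b (-a) t) (at t)"
  unfolding great_circle_def [abs_def]
  by (auto intro!: derivative_eq_intros simp: great_circle_def algebra_simps)

lemma isCont_great_circle: "isCont (great_circle a b) t"
  unfolding great_circle_def [abs_def] by (intro continuous_intros)

lemma sin_scaleR_great_circle:
  "sin \<theta> *\<^sub>R great_circle a b t = sin (\<theta> - t) *\<^sub>R a + sin t *\<^sub>R great_circle a b \<theta>"
  by (simp add: great_circle_def sin_diff scaleR_add_right algebra_simps)

lemma inner_great_circle:
  fixes a b :: "'a::real_inner"
  assumes "a \<bullet> a = 1" "b \<bullet> b = 1" "a \<bullet> b = 0"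
  shows "great_circle a b t \<bullet> great_circle a b t = 1"
    and "great_circle b (-a) t \<bullet> great_circle a b t = 0"
  using assms sin_cos_squared_add[of t]
  by (auto simp: great_circle_def inner_add_left inner_add_right inner_commute[of b a]
      power2_eq_square algebra_simps)

lemma great_circle_arc_in_cap:
  fixes a b z0 :: "'a::real_inner"
  assumes "0 \<le> m" "m \<le> a \<bullet> z0" "m \<le> great_circle a b \<theta> \<bullet> z0"
    and "\<theta> < pi" "0 \<le> t" "t \<le> \<theta>"
  shows "m \<le> great_circle a b t \<bullet> z0"
proof (cases "t = 0")
  case True
  then show ?thesis using assms(2) by simp
next
  case False
  have sin_nonneg: "0 \<le> sin (\<theta> - t)" "0 \<le> sin t"
    using assms by (auto intro!: sin_ge_zero)
  have "sin \<theta> = sin (\<theta> - t) * cos t + cos (\<theta> - t) * sin t"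
    using sin_add[of "\<theta> - t" t] by simp
  also have "\<dots> \<le> sin (\<theta> - t) + sin t"
    using mult_left_le[OF cos_le_one sin_nonneg(1), of t]
      mult_left_le[OF cos_le_one sin_nonneg(2), of "\<theta> - t"]
    by (simp add: mult.commute)
  finally have "m * sin \<theta> \<le> m * (sin (\<theta> - t) + sin t)"
    using assms(1) by (rule mult_left_mono)
  also have "\<dots> = sin (\<theta> - t) * m + sin t * m"
    by (simp add: algebra_simps)
  also have "\<dots> \<le> sin (\<theta> - t) * (a \<bullet> z0) + sin t * (great_circle a b \<theta> \<bullet> z0)"
    using assms(2,3) sin_nonneg by (intro add_mono mult_left_mono)
  also have "\<dots> = sin \<theta> * (great_circle a b t \<bullet> z0)"
    using arg_cong[OF sin_scaleR_great_circle[of \<theta> a b t], of "\<lambda>x. x \<bullet> z0"]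
    by (simp add: inner_add_left)
  finally show ?thesis
    using sin_gt_zero[of \<theta>] False assms(4-6) by (simp add: mult.commute[of m])
qed

lemma norm_diff_sq_unit:
  fixes a c :: "'a::real_inner"
  assumes "norm a = 1" "norm c = 1"
  shows "(norm (a - c))\<^sup>2 = 2 - 2 * (a \<bullet> c)"
  using assms
  by (simp add: power2_norm_eq_inner inner_diff_left inner_diff_right inner_commute[of c a] norm_eq_1)

lemma great_circle_through:
  fixes a c :: "'a::real_inner"
  assumes "norm a = 1" "norm c = 1" "a \<noteq> c" "a \<noteq> - c"
  obtains b \<theta> where "b \<bullet> b = 1" "a \<bullet> b = 0" "0 < \<theta>" "\<theta> < pi" "great_circle a b \<theta> = c"
proof -
  define k where "k = a \<bullet> c"
  have "k \<noteq> 1"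
    using norm_diff_sq_unit[OF assms(1,2)] assms(3) by (auto simp: k_def)
  moreover have "k \<noteq> -1"
  proof
    assume "k = -1"
    then have "(norm (a + c))\<^sup>2 = 0"
      using norm_diff_sq_unit[of a "- c"] assms(1,2) by (simp add: k_def)
    with assms(4) show False
      by (simp add: eq_neg_iff_add_eq_0)
  qed
  moreover have "\<bar>k\<bar> \<le> 1"
    using Cauchy_Schwarz_ineq2[of a c] assms(1,2) by (simp add: k_def)
  ultimately have k: "-1 < k" "k < 1" by auto
  define \<theta> where "\<theta> = arccos k"
  have \<theta>: "0 < \<theta>" "\<theta> < pi"
    using arccos_lt_bounded[OF k] by (auto simp: \<theta>_def)
  have cos: "cos \<theta> = k" and sin_sq: "(sin \<theta>)\<^sup>2 = 1 - k\<^sup>2"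
    using k by (simp_all add: \<theta>_def cos_arccos sin_arccos abs_square_less_1 less_imp_le)
  have sin_pos: "0 < sin \<theta>"
    using \<theta> by (rule sin_gt_zero)
  define b where "b = (1 / sin \<theta>) *\<^sub>R (c - k *\<^sub>R a)"
  have "great_circle a b \<theta> = c"
    using sin_pos by (simp add: great_circle_def b_def cos)
  moreover have "a \<bullet> b = 0"
    using assms(1) by (simp add: b_def inner_diff_right k_def norm_eq_1)
  moreover have "b \<bullet> b = 1"
    using assms(1,2) sin_pos sin_sq
    by (simp add: b_def inner_diff_left inner_diff_right inner_commute[of c a] k_def[symmetric]
        norm_eq_1 power2_eq_square field_simps)
  ultimately show thesis
    using that \<theta> by blast
qed

lemma has_real_derivative_vec_nth:
  "(\<gamma> has_vector_derivative \<gamma>') F \<Longrightarrow> ((\<lambda>s. \<gamma> s $ k) has_real_derivative \<gamma>' $ k) F"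
  using bounded_linear.has_vector_derivative[OF bounded_linear_vec_nth]
  by (simp add: has_real_derivative_iff_has_vector_derivative)

lemma has_real_derivative_inner_matrix_vector_mult:
  fixes A :: "real ^ 'n ^ 'm"
  assumes "(\<gamma> has_vector_derivative \<gamma>') (at t within S)"
    and "(\<delta> has_vector_derivative \<delta>') (at t within S)"
  shows "((\<lambda>s. \<gamma> s \<bullet> (A *v \<delta> s)) has_real_derivative
      \<gamma>' \<bullet> (A *v \<delta> t) + \<gamma> t \<bullet> (A *v \<delta>')) (at t within S)"
  using bounded_bilinear.has_vector_derivative[OF bounded_bilinear_inner assms(1)
      bounded_linear.has_vector_derivative[OF matrix_vector_mul_bounded_linear assms(2)]]
  by (simp add: has_real_derivative_iff_has_vector_derivative add.commute)

definition obj_dir_deriv :: "real ^ 'n ^ 'n \<Rightarrow> real \<Rightarrow> real ^ 'n \<Rightarrow> real ^ 'n \<Rightarrow> real" where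
  "obj_dir_deriv A \<beta> z v =
     (v \<bullet> (A *v z) + z \<bullet> (A *v v)) / 2 + 2 * \<beta> * (\<Sum>k\<in>UNIV. (z $ k) ^ 3 * v $ k)"

lemma obj_has_real_derivative_along:
  assumes "(\<gamma> has_vector_derivative \<gamma>') (at t)"
  shows "((\<lambda>s. obj A \<beta> (\<gamma> s)) has_real_derivative obj_dir_deriv A \<beta> (\<gamma> t) \<gamma>') (at t)"
proof -
  have "((\<lambda>s. \<Sum>k\<in>UNIV. (\<gamma> s $ k) ^ 4) has_real_derivative
      (\<Sum>k\<in>UNIV. 4 * (\<gamma> t $ k) ^ 3 * \<gamma>' $ k)) (at t)"
    by (auto intro!: derivative_eq_intros has_real_derivative_vec_nth[OF assms] simp: mult_ac)
  from DERIV_add[OF DERIV_cmult[OF has_real_derivative_inner_matrix_vector_mult[OF assms assms]]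
      DERIV_cmult[OF this]]
  show ?thesis
    unfolding obj_def
    by (rule DERIV_cong) (simp add: obj_dir_deriv_def sum_distrib_left algebra_simps)
qed

lemma obj_dir_deriv_has_real_derivative_along:
  assumes \<gamma>: "(\<gamma> has_vector_derivative \<gamma>') (at t)"
    and \<delta>: "(\<delta> has_vector_derivative \<delta>') (at t)"
  shows "((\<lambda>s. obj_dir_deriv A \<beta> (\<gamma> s) (\<delta> s)) has_real_derivative
      (\<delta>' \<bullet> (A *v \<gamma> t) + \<delta> t \<bullet> (A *v \<gamma>') + \<gamma>' \<bullet> (A *v \<delta> t) + \<gamma> t \<bullet> (A *v \<delta>')) / 2
      + 2 * \<beta> * (\<Sum>k\<in>UNIV. 3 * (\<gamma> t $ k)\<^sup>2 * \<gamma>' $ k * \<delta> t $ k + (\<gamma> t $ k) ^ 3 * \<delta>' $ k)) (at t)"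
proof -
  have "((\<lambda>s. \<Sum>k\<in>UNIV. (\<gamma> s $ k) ^ 3 * \<delta> s $ k) has_real_derivative
      (\<Sum>k\<in>UNIV. 3 * (\<gamma> t $ k)\<^sup>2 * \<gamma>' $ k * \<delta> t $ k + (\<gamma> t $ k) ^ 3 * \<delta>' $ k)) (at t)"
    by (auto intro!: derivative_eq_intros has_real_derivative_vec_nth[OF \<gamma>]
        has_real_derivative_vec_nth[OF \<delta>] simp: algebra_simps)
  from DERIV_add[OF DERIV_cdivide[OF DERIV_add[OF has_real_derivative_inner_matrix_vector_mult[OF \<delta> \<gamma>]
        has_real_derivative_inner_matrix_vector_mult[OF \<gamma> \<delta>]]] DERIV_cmult[OF this]]
  show ?thesis
    unfolding obj_dir_deriv_def by (rule DERIV_cong) (simp add: algebra_simps)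
qed

lemma hess_form_expand:
  "hess_form A \<beta> z v = v \<bullet> (A *v v) + 6 * \<beta> * (\<Sum>k\<in>UNIV. (z $ k)\<^sup>2 * (v $ k)\<^sup>2)
     - (z \<bullet> (A *v z) + 2 * \<beta> * norm4_pow4 z) * (v \<bullet> v)"
proof -
  have "(\<chi> i j. if i = j then 6 * \<beta> * (z $ i)\<^sup>2 else 0) *v v = (\<chi> i. 6 * \<beta> * (z $ i)\<^sup>2 * v $ i)"
    by (auto simp: vec_eq_iff matrix_vector_mult_def if_distrib[of "\<lambda>x. x * _"] cong: if_cong)
  moreover have "v \<bullet> (\<chi> i. 6 * \<beta> * (z $ i)\<^sup>2 * v $ i) = 6 * \<beta> * (\<Sum>k\<in>UNIV. (z $ k)\<^sup>2 * (v $ k)\<^sup>2)"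
    by (simp add: inner_vec_def sum_distrib_left power2_eq_square mult_ac)
  ultimately show ?thesis
    unfolding hess_form_def Let_def
    by (simp add: matrix_vector_mult_add_rdistrib matrix_vector_mult_diff_rdistrib
        inner_add_right inner_diff_right scaleR_matrix_vector_assoc[symmetric])
qed

lemma obj_dir_deriv_great_circle_has_real_derivative:
  fixes A :: "real ^ 'n ^ 'n" and a b :: "real ^ 'n"
  assumes "a \<bullet> a = 1" "b \<bullet> b = 1" "a \<bullet> b = 0"
  shows "((\<lambda>s. obj_dir_deriv A \<beta> (great_circle a b s) (great_circle b (-a) s)) has_real_derivative
      hess_form A \<beta> (great_circle a b t) (great_circle b (-a) t)) (at t)"
proof -
  let ?z = "great_circle a b t" and ?v = "great_circle b (-a) t"
  have "great_circle (-a) (-b) t = - ?z"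
    by (simp add: great_circle_def)
  then have "(great_circle b (-a) has_vector_derivative - ?z) (at t)"
    using great_circle_has_vector_derivative[of b "-a" t] by simp
  from obj_dir_deriv_has_real_derivative_along[OF great_circle_has_vector_derivative this]
  show ?thesis
  proof (rule DERIV_cong)
    have unit: "?v \<bullet> ?v = 1"
      using inner_great_circle(1)[of b "-a" t] assms by (simp add: inner_commute)
    have "A *v (- ?z) = - (A *v ?z)"
      using matrix_vector_mult_diff_distrib[of A 0 ?z] by simp
    then show "((- ?z) \<bullet> (A *v ?z) + ?v \<bullet> (A *v ?v) + ?v \<bullet> (A *v ?v) + ?z \<bullet> (A *v (- ?z))) / 2
        + 2 * \<beta> * (\<Sum>k\<in>UNIV. 3 * (?z $ k)\<^sup>2 * ?v $ k * ?v $ k + (?z $ k) ^ 3 * (- ?z) $ k)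
      = hess_form A \<beta> ?z ?v"
      using unit
      by (simp add: hess_form_expand norm4_pow4_def sum.distrib sum_subtractf sum_distrib_left
          power2_eq_square power3_eq_cube power4_eq_xxxx algebra_simps diff_divide_distrib)
  qed
qed

lemma region_iff:
  assumes "norm z0 = 1"
  shows "z \<in> region z0 \<nu> \<longleftrightarrow> norm z = 1 \<and> 1 - \<nu> / 2 \<le> z \<bullet> z0"
  using norm_diff_sq_unit[OF _ assms, of z] by (auto simp: region_def unit_sphere_def)

lemma region_great_circle_arc:
  assumes "norm z0 = 1" "\<nu> \<le> 1" "z1 \<in> region z0 \<nu>" "z2 \<in> region z0 \<nu>" "z1 \<noteq> z2"
  obtains b \<theta> where "b \<bullet> b = 1" "z1 \<bullet> b = 0" "0 < \<theta>" "great_circle z1 b \<theta> = z2"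
    "\<And>t. 0 \<le> t \<Longrightarrow> t \<le> \<theta> \<Longrightarrow> great_circle z1 b t \<in> region z0 \<nu>"
proof -
  have z1: "norm z1 = 1" "1 - \<nu> / 2 \<le> z1 \<bullet> z0" and z2: "norm z2 = 1" "1 - \<nu> / 2 \<le> z2 \<bullet> z0"
    using assms(3,4) region_iff[OF assms(1)] by auto
  have "z1 \<noteq> - z2"
    using z1(2) z2(2) assms(2) by auto
  with z1(1) z2(1) assms(5) obtain b \<theta>
    where b: "b \<bullet> b = 1" "z1 \<bullet> b = 0" and \<theta>: "0 < \<theta>" "\<theta> < pi" and z2_eq: "great_circle z1 b \<theta> = z2"
    by (rule great_circle_through)
  have "great_circle z1 b t \<in> region z0 \<nu>" if "0 \<le> t" "t \<le> \<theta>" for t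
  proof -
    have "norm (great_circle z1 b t) = 1"
      using inner_great_circle(1)[of z1 b t] z1(1) b by (simp add: norm_eq_1)
    moreover have "1 - \<nu> / 2 \<le> great_circle z1 b t \<bullet> z0"
      using great_circle_arc_in_cap[of "1 - \<nu> / 2" z1 z0 b \<theta> t] z1(2) z2(2) z2_eq \<theta>(2) that assms(2)
      by simp
    ultimately show ?thesis
      using region_iff[OF assms(1)] by blast
  qed
  with b \<theta>(1) z2_eq that show thesis
    by blast
qed

lemma has_real_derivative_nonneg_at_right_min:
  fixes G :: "real \<Rightarrow> real"
  assumes "(G has_real_derivative D) (at a)" "eventually (\<lambda>t. G a \<le> G t) (at_right a)"
  shows "0 \<le> D"
proof (rule ccontr)
  assume "\<not> 0 \<le> D"
  then obtain d where "0 < d" "\<forall>h>0. h < d \<longrightarrow> G (a + h) < G a"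
    using DERIV_neg_dec_right[OF assms(1)] by auto
  then have "eventually (\<lambda>t. G t < G a) (at_right a)"
    by (intro eventually_at_rightI[of a "a + d"]) (auto dest: spec[of _ "_ - a"])
  with assms(2) have "eventually (\<lambda>t. False) (at_right a)"
    by eventually_elim simp
  then show False
    by simp
qed

lemma has_real_derivative_nonpos_at_left_min:
  fixes G :: "real \<Rightarrow> real"
  assumes "(G has_real_derivative D) (at b)" "eventually (\<lambda>t. G b \<le> G t) (at_left b)"
  shows "D \<le> 0"
proof (rule ccontr)
  assume "\<not> D \<le> 0"
  then obtain d where "0 < d" "\<forall>h>0. h < d \<longrightarrow> G (b - h) < G b"
    using DERIV_pos_inc_left[OF assms(1)] by auto
  then have "eventually (\<lambda>t. G t < G b) (at_left b)"
    by (intro eventually_at_leftI[of "b - d" b]) (auto dest: spec[of _ "b - _"])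
  with assms(2) have "eventually (\<lambda>t. False) (at_left b)"
    by eventually_elim simp
  then show False
    by simp
qed

lemma one_sided_minima_imp_second_derivative_nonpos:
  fixes G G' G'' :: "real \<Rightarrow> real"
  assumes "a < b"
    and G': "\<And>t. (G has_real_derivative G' t) (at t)"
    and G'': "\<And>t. (G' has_real_derivative G'' t) (at t)"
    and "eventually (\<lambda>t. G a \<le> G t) (at_right a)" "eventually (\<lambda>t. G b \<le> G t) (at_left b)"
  obtains \<xi> where "a < \<xi>" "\<xi> < b" "G'' \<xi> \<le> 0"
proof -
  obtain \<xi> where \<xi>: "a < \<xi>" "\<xi> < b" and mvt: "G' b - G' a = (b - a) * G'' \<xi>"
    using MVT2[OF assms(1) G''] by blast
  have "0 \<le> G' a" "G' b \<le> 0"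
    using has_real_derivative_nonneg_at_right_min[OF G' assms(4)]
      has_real_derivative_nonpos_at_left_min[OF G' assms(5)] by auto
  with mvt have "(b - a) * G'' \<xi> \<le> 0"
    by linarith
  with assms(1) have "G'' \<xi> \<le> 0"
    by (simp add: mult_le_0_iff)
  with \<xi> show thesis
    by (rule that)
qed

lemma local_minimizer_on_eventually_le:
  assumes "local_minimizer_on g S z" "(\<gamma> \<longlongrightarrow> z) F" "eventually (\<lambda>s. \<gamma> s \<in> S) F"
  shows "eventually (\<lambda>s. g z \<le> g (\<gamma> s)) F"
proof -
  obtain \<epsilon> where "0 < \<epsilon>" and min: "\<forall>w\<in>S. norm (w - z) < \<epsilon> \<longrightarrow> g z \<le> g w"
    using assms(1) by (auto simp: local_minimizer_on_def)
  show ?thesis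
    using assms(3) tendstoD[OF assms(2) \<open>0 < \<epsilon>\<close>]
    by eventually_elim (auto simp: dist_norm min)
qed

lemma local_minimizers_on_curve_imp_second_derivative_nonpos:
  fixes \<gamma> :: "real \<Rightarrow> real ^ 'n" and G' G'' :: "real \<Rightarrow> real"
  assumes "local_minimizer_on g S (\<gamma> a)" "local_minimizer_on g S (\<gamma> b)" "a < b"
    and "\<And>t. isCont \<gamma> t" "\<And>t. a \<le> t \<Longrightarrow> t \<le> b \<Longrightarrow> \<gamma> t \<in> S"
    and "\<And>t. ((\<lambda>s. g (\<gamma> s)) has_real_derivative G' t) (at t)"
    and "\<And>t. (G' has_real_derivative G'' t) (at t)"
  obtains \<xi> where "a < \<xi>" "\<xi> < b" "G'' \<xi> \<le> 0"
proof -
  have "(\<gamma> \<longlongrightarrow> \<gamma> a) (at_right a)" "(\<gamma> \<longlongrightarrow> \<gamma> b) (at_left b)"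
    using assms(4) by (simp_all add: isCont_def filterlim_at_split)
  moreover have "eventually (\<lambda>t. \<gamma> t \<in> S) (at_right a)" "eventually (\<lambda>t. \<gamma> t \<in> S) (at_left b)"
    using eventually_at_right_real[OF assms(3)] eventually_at_left_real[OF assms(3)] assms(5)
    by (auto elim!: eventually_mono)
  ultimately show thesis
    using one_sided_minima_imp_second_derivative_nonpos[OF assms(3,6,7)] that
      local_minimizer_on_eventually_le[OF assms(1)] local_minimizer_on_eventually_le[OF assms(2)]
    by blast
qed

theorem lemma9:
  fixes A :: "real ^ 'n ^ 'n" and \<beta> \<nu> :: real and z0 :: "real ^ 'n"
  assumes symA: "transpose A = A"
    and beta_pos: "\<beta> > 0"
    and nu_pos: "0 < \<nu>" and nu_le: "\<nu> \<le> 1"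
    and z0_sphere: "z0 \<in> unit_sphere"
    and hess_pos: "\<forall>z\<in>region z0 \<nu>. \<forall>v\<in>tangent_space z - {0}. hess_form A \<beta> z v > 0"
  shows "\<forall>z1 z2. local_minimizer_on (obj A \<beta>) (region z0 \<nu>) z1
                \<and> local_minimizer_on (obj A \<beta>) (region z0 \<nu>) z2 \<longrightarrow> z1 = z2"
proof (intro allI impI, elim conjE, rule ccontr)
  fix z1 z2
  assume min1: "local_minimizer_on (obj A \<beta>) (region z0 \<nu>) z1"
    and min2: "local_minimizer_on (obj A \<beta>) (region z0 \<nu>) z2" and "z1 \<noteq> z2"
  have z1: "z1 \<in> region z0 \<nu>" and "z2 \<in> region z0 \<nu>"
    using min1 min2 by (simp_all add: local_minimizer_on_def)
  moreover have "norm z0 = 1"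
    using z0_sphere by (simp add: unit_sphere_def)
  ultimately obtain b \<theta> where b: "b \<bullet> b = 1" "z1 \<bullet> b = 0" and "0 < \<theta>"
    and z2_eq: "great_circle z1 b \<theta> = z2"
    and arc: "\<And>t. 0 \<le> t \<Longrightarrow> t \<le> \<theta> \<Longrightarrow> great_circle z1 b t \<in> region z0 \<nu>"
    using region_great_circle_arc nu_le \<open>z1 \<noteq> z2\<close> by metis
  have "z1 \<bullet> z1 = 1"
    using z1 by (simp add: region_def unit_sphere_def norm_eq_1)
  note orthonormal = this b
  have "local_minimizer_on (obj A \<beta>) (region z0 \<nu>) (great_circle z1 b 0)"
    and "local_minimizer_on (obj A \<beta>) (region z0 \<nu>) (great_circle z1 b \<theta>)"
    using min1 min2 z2_eq by simp_all
  from local_minimizers_on_curve_imp_second_derivative_nonpos[OF this \<open>0 < \<theta>\<close> isCont_great_circle arc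
      obj_has_real_derivative_along[OF great_circle_has_vector_derivative]
      obj_dir_deriv_great_circle_has_real_derivative[OF orthonormal]]
  obtain \<xi> where \<xi>: "0 < \<xi>" "\<xi> < \<theta>"
    and hess_nonpos: "hess_form A \<beta> (great_circle z1 b \<xi>) (great_circle b (-z1) \<xi>) \<le> 0" .
  have "great_circle b (-z1) \<xi> \<in> tangent_space (great_circle z1 b \<xi>) - {0}"
    using inner_great_circle[OF orthonormal, of \<xi>] inner_great_circle(1)[of b "-z1" \<xi>] orthonormal
    by (auto simp: tangent_space_def inner_commute)
  moreover have "great_circle z1 b \<xi> \<in> region z0 \<nu>"
    using arc \<xi> by simp
  ultimately show False
    using hess_pos hess_nonpos by (meson bspec not_le)
qed

end
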